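(* Let $c\in\mathbb{N}$ be a constant and let $g=(g_n)_{n\in\mathbb{N}}$, $g_n:\{0,1\}^n\to\{0,1\}^{n+c}$, be a generator. Suppose there exist a polynomial $p$, a constant $\epsilon>0$, and a strictly increasing infinite sequence $(n_i)_{i\in\mathbb{N}}\subseteq\mathbb{N}$ such that (1) $n_{i+1}\le p(n_i)$ for all $i$, and (2) for every $n\in\{n_i: i\in\mathbb{N}\}$, $H_{\mathrm{nh}}(g_n)\ge 2^{n^\epsilon}$ (respectively, $H_{\mathrm{dh}}(g_n)\ge 2^{n^\epsilon}$). Then there exists a generator $G_n:\{0,1\}^n\to\{0,1\}^{n+c}$ constructed from $g$ which is $c$ super-bits (respectively, $c$ demi-bits). Concretely, one may take $G(x)=g_{n_i}(x[1\ldots n_i])\cdot x[n_i+1\ldots n]$ for $x\in\{0,1\}^n$ with $n_i\le n<n_{i+1}$ (for $n\ge n_1$).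
   Context: A generator is a family $g_n:\{0,1\}^n\to\{0,1\}^{l(n)}$ computable by polynomial-size (nonuniform) circuits with $l(n)>n$. A nondeterministic circuit $D(x,w)$ accepts input $x$ (written $D(x)=1$) iff there is an assignment to the nondeterministic input bits $w$ with $D(x,w)=1$. The nondeterministic hardness $H_{\mathrm{nh}}(g_n)$ is the minimal $s$ such that some nondeterministic circuit $D$ of size at most $s$ satisfies $\Pr_{y\in\{0,1\}^{l(n)}}[D(y)=1]-\Pr_{x\in\{0,1\}^n}[D(g_n(x))=1]\ge 1/s$. The demi-hardness $H_{\mathrm{dh}}(g_n)$ is the minimal $s$ such that some nondeterministic circuit $D$ of size at most $s$ satisfies $\Pr_{y}[D(y)=1]\ge 1/s$ and $\Pr_x[D(g_n(x))=1]=0$. A generator $g_n:\{0,1\}^n\to\{0,1\}^{n+c}$ is $c$ super-bits (resp. $c$ demi-bits) if there is $\epsilon>0$ such that $H_{\mathrm{nh}}(g_n)\ge 2^{n^\epsilon}$ (resp. $H_{\mathrm{dh}}(g_n)\ge 2^{n^\epsilon}$) for all sufficiently large $n$. Probabilities are over the uniform distribution. $x[i\ldots j]$ denotes the substring of $x$ from position $i$ to $j$, and $\cdot$ denotes concatenation. *)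

theory Defs
  imports Complex_Main "HOL-Library.Extended_Real" "HOL-Computational_Algebra.Polynomial"
begin

text \<open>A circuit is a list of gates; gate number k may refer to input bits and to
 earlier gates (wires with index < k). References to non-existent wires/inputs
 evaluate to False.\<close>

datatype gate = Inp nat | Cst bool | Neg nat | Conj nat nat | Disj nat nat

fun gval :: "bool list \<Rightarrow> bool list \<Rightarrow> gate \<Rightarrow> bool" where
  "gval x vs (Inp i) = (i < length x \<and> x ! i)"
| "gval x vs (Cst b) = b"
| "gval x vs (Neg i) = (i < length vs \<and> \<not> vs ! i)"
| "gval x vs (Conj i j) = (i < length vs \<and> j < length vs \<and> vs ! i \<and> vs ! j)"
| "gval x vs (Disj i j) = (i < length vs \<and> j < length vs \<and> (vs ! i \<or> vs ! j))"

definition wires :: "gate list \<Rightarrow> bool list \<Rightarrow> bool list" where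
  "wires gs x = foldl (\<lambda>vs g. vs @ [gval x vs g]) [] gs"

definition circ_eval :: "gate list \<Rightarrow> bool list \<Rightarrow> bool" where
  "circ_eval gs x = (gs \<noteq> [] \<and> last (wires gs x))"

type_synonym mcirc = "gate list \<times> nat list"

definition mcirc_eval :: "mcirc \<Rightarrow> bool list \<Rightarrow> bool list" where
  "mcirc_eval C x = map (\<lambda>i. i < length (fst C) \<and> wires (fst C) x ! i) (snd C)"

definition mcirc_size :: "mcirc \<Rightarrow> nat" where
  "mcirc_size C = length (fst C)"

text \<open>Nondeterministic circuit: a circuit together with the number k of
 nondeterministic input bits; on input y it is run on y @ w.\<close>
type_synonym ndcirc = "gate list \<times> nat"

definition nd_accepts :: "ndcirc \<Rightarrow> bool list \<Rightarrow> bool" where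
  "nd_accepts D y = (\<exists>w. length w = snd D \<and> circ_eval (fst D) (y @ w))"

definition nd_size :: "ndcirc \<Rightarrow> nat" where
  "nd_size D = length (fst D)"

definition prob_bits :: "nat \<Rightarrow> (bool list \<Rightarrow> bool) \<Rightarrow> real" where
  "prob_bits m P = real (card {x :: bool list. length x = m \<and> P x}) / 2 ^ m"

section \<open>Hardness measures (minimal s; +infinity if no such s)\<close>

definition Hnh :: "(bool list \<Rightarrow> bool list) \<Rightarrow> nat \<Rightarrow> nat \<Rightarrow> ereal" where
  "Hnh f n l = Inf {ereal (real s) | s. 1 \<le> s \<and>
     (\<exists>D. nd_size D \<le> s \<and>
        prob_bits l (nd_accepts D) - prob_bits n (\<lambda>x. nd_accepts D (f x)) \<ge> 1 / real s)}"

definition Hdh :: "(bool list \<Rightarrow> bool list) \<Rightarrow> nat \<Rightarrow> nat \<Rightarrow> ereal" where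
  "Hdh f n l = Inf {ereal (real s) | s. 1 \<le> s \<and>
     (\<exists>D. nd_size D \<le> s \<and>
        prob_bits l (nd_accepts D) \<ge> 1 / real s \<and>
        prob_bits n (\<lambda>x. nd_accepts D (f x)) = 0)}"

definition is_generator :: "(nat \<Rightarrow> bool list \<Rightarrow> bool list) \<Rightarrow> (nat \<Rightarrow> nat) \<Rightarrow> bool" where
  "is_generator g l \<longleftrightarrow> (\<forall>n. n < l n) \<and>
     (\<forall>n x. length x = n \<longrightarrow> length (g n x) = l n) \<and>
     (\<exists>k. \<forall>n. \<exists>C. mcirc_size C \<le> n ^ k + k \<and>
          (\<forall>x. length x = n \<longrightarrow> mcirc_eval C x = g n x))"

definition super_bits :: "(nat \<Rightarrow> bool list \<Rightarrow> bool list) \<Rightarrow> nat \<Rightarrow> bool" where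
  "super_bits g c \<longleftrightarrow> is_generator g (\<lambda>n. n + c) \<and>
     (\<exists>\<epsilon>>0. \<exists>N. \<forall>n\<ge>N. Hnh (g n) n (n + c) \<ge> ereal (2 powr (real n powr \<epsilon>)))"

definition demi_bits :: "(nat \<Rightarrow> bool list \<Rightarrow> bool list) \<Rightarrow> nat \<Rightarrow> bool" where
  "demi_bits g c \<longleftrightarrow> is_generator g (\<lambda>n. n + c) \<and>
     (\<exists>\<epsilon>>0. \<exists>N. \<forall>n\<ge>N. Hdh (g n) n (n + c) \<ge> ereal (2 powr (real n powr \<epsilon>)))"

end

theory Submission
  imports Defs
begin

text \<open>Padding preserves hardness. A distinguisher for x \<mapsto> g_m(x[1..m]) \<cdot> x[m+1..n]
  sees a uniformly random suffix on both sides, so for some fixed suffix its advantage is at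
  least the average; hardwiring that suffix yields a distinguisher for g_m of no larger size.
  For n_i \<le> n < n_{i+1} the polynomial gap gives n \<le> n_i^(d+1) once n is large, hence
  2^(n_i^\<epsilon>) \<ge> 2^(n^(\<epsilon>/(d+1))), and the padded generator is hard at every length.\<close>

fun subst_inputs :: "(nat \<Rightarrow> gate) \<Rightarrow> gate \<Rightarrow> gate" where
  "subst_inputs f (Inp i) = f i"
| "subst_inputs f h = h"

lemma wires_Nil [simp]: "wires [] x = []"
  by (simp add: wires_def)

lemma wires_snoc: "wires (gs @ [h]) x = wires gs x @ [gval x (wires gs x) h]"
  by (simp add: wires_def)

lemma length_wires [simp]: "length (wires gs x) = length gs"
  by (induction gs rule: rev_induct) (auto simp: wires_snoc)

lemma wires_map_subst_inputs:
  assumes "\<And>i vs. gval x' vs (f i) = gval x vs (Inp i)"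
  shows "wires (map (subst_inputs f) gs) x' = wires gs x"
proof (induction gs rule: rev_induct)
  case (snoc h gs)
  have "gval x' vs (subst_inputs f h) = gval x vs h" for vs
    using assms by (cases h) auto
  with snoc show ?case by (simp add: wires_snoc)
qed simp

definition wire_free :: "gate \<Rightarrow> bool" where
  "wire_free h \<longleftrightarrow> (\<exists>i. h = Inp i) \<or> (\<exists>b. h = Cst b)"

lemma wires_append_wire_free:
  assumes "\<forall>h\<in>set hs. wire_free h"
  shows "wires (gs @ hs) x = wires gs x @ map (gval x []) hs"
  using assms
proof (induction hs rule: rev_induct)
  case (snoc h hs)
  then have "gval x vs h = gval x [] h" for vs
    by (auto simp: wire_free_def)
  with snoc show ?case
    by (simp add: wires_snoc flip: append_assoc)
qed simp

definition hardwire_input :: "nat \<Rightarrow> bool list \<Rightarrow> nat \<Rightarrow> gate" where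
  "hardwire_input l z j =
     (if j < l then Inp j else if j < l + length z then Cst (z ! (j - l)) else Inp (j - length z))"

text \<open>The inputs l, \<dots>, l + |z| - 1 are replaced by the constants z, and the nondeterministic
  bits behind them are shifted down.\<close>
definition hardwire :: "nat \<Rightarrow> bool list \<Rightarrow> ndcirc \<Rightarrow> ndcirc" where
  "hardwire l z D = (map (subst_inputs (hardwire_input l z)) (fst D), snd D)"

lemma nd_size_hardwire [simp]: "nd_size (hardwire l z D) = nd_size D"
  by (simp add: hardwire_def nd_size_def)

lemma nd_accepts_hardwire:
  assumes "length y = l"
  shows "nd_accepts (hardwire l z D) y = nd_accepts D (y @ z)"
proof -
  have "wires (fst (hardwire l z D)) (y @ w) = wires (fst D) (y @ z @ w)" for w
    unfolding hardwire_def fst_conv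
    by (rule wires_map_subst_inputs) (use assms in \<open>auto simp: hardwire_input_def nth_append add.commute\<close>)
  then show ?thesis
    by (simp add: nd_accepts_def circ_eval_def hardwire_def)
qed

text \<open>Inputs beyond m are replaced by False, which is what C reads there on an input of length m;
  outputs of C naming no gate are redirected to the new constant gate for the same reason.\<close>
definition copy_suffix :: "nat \<Rightarrow> nat \<Rightarrow> mcirc \<Rightarrow> mcirc" where
  "copy_suffix m n C =
     (map (subst_inputs (\<lambda>j. if j < m then Inp j else Cst False)) (fst C) @ Cst False # map Inp [m..<n],
      map (\<lambda>i. if i < length (fst C) then i else length (fst C)) (snd C)
        @ map (\<lambda>t. length (fst C) + 1 + t) [0..<n - m])"

lemma mcirc_size_copy_suffix: "mcirc_size (copy_suffix m n C) = mcirc_size C + 1 + (n - m)"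
  by (simp add: copy_suffix_def mcirc_size_def)

lemma mcirc_eval_copy_suffix:
  assumes "length x = n" "m \<le> n"
  shows "mcirc_eval (copy_suffix m n C) x = mcirc_eval C (take m x) @ drop m x"
proof -
  obtain gs outs where C: "C = (gs, outs)"
    by (cases C)
  define T where "T = copy_suffix m n C"
  have "wires (map (subst_inputs (\<lambda>j. if j < m then Inp j else Cst False)) gs) x = wires gs (take m x)"
    by (rule wires_map_subst_inputs) (use assms in auto)
  then have W: "wires (fst T) x = wires gs (take m x) @ False # map (\<lambda>j. j < n \<and> x ! j) [m..<n]"
    unfolding T_def C copy_suffix_def fst_conv
    by (subst wires_append_wire_free) (auto simp: wire_free_def assms(1))
  have L: "length (fst T) = length gs + 1 + (n - m)"
    by (simp add: T_def C copy_suffix_def)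
  have S: "snd T = map (\<lambda>i. if i < length gs then i else length gs) outs
      @ map (\<lambda>t. length gs + 1 + t) [0..<n - m]"
    by (simp add: T_def C copy_suffix_def)
  have "map (\<lambda>i. i < length (fst T) \<and> wires (fst T) x ! i)
      (map (\<lambda>i. if i < length gs then i else length gs) outs) = mcirc_eval C (take m x)"
    by (auto simp: C mcirc_eval_def L W nth_append)
  moreover have "map (\<lambda>i. i < length (fst T) \<and> wires (fst T) x ! i)
      (map (\<lambda>t. length gs + 1 + t) [0..<n - m]) = drop m x"
    by (rule nth_equalityI) (use assms in \<open>auto simp: L W nth_append\<close>)
  ultimately have "mcirc_eval T x = mcirc_eval C (take m x) @ drop m x"
    unfolding mcirc_eval_def[of T] S map_append by (simp only:)
  then show ?thesis
    by (simp add: T_def)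
qed

section \<open>Averaging over a uniformly random suffix\<close>

lemma finite_bitstrings: "finite {xs :: bool list. length xs = n}"
  using finite_lists_length_eq[of "UNIV :: bool set" n] by simp

lemma card_bitstrings: "card {xs :: bool list. length xs = n} = 2 ^ n"
  using card_lists_length_eq[of "UNIV :: bool set" n] by simp

lemma prob_bits_cong: "(\<And>x. length x = m \<Longrightarrow> P x = Q x) \<Longrightarrow> prob_bits m P = prob_bits m Q"
  unfolding prob_bits_def by (metis (mono_tags, lifting) Collect_cong)

lemma prob_bits_nonneg: "0 \<le> prob_bits m P"
  by (simp add: prob_bits_def)

lemma card_bitstrings_add:
  "card {x :: bool list. length x = l + r \<and> P x} =
     (\<Sum>z | length z = r. card {y. length y = l \<and> P (y @ z)})"
proof -
  let ?A = "\<lambda>z. (\<lambda>y. y @ z) ` {y. length y = l \<and> P (y @ z)}"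
  have "{x :: bool list. length x = l + r \<and> P x} = (\<Union>z\<in>{z. length z = r}. ?A z)"
  proof (intro set_eqI iffI)
    fix x :: "bool list"
    assume x: "x \<in> {x. length x = l + r \<and> P x}"
    have "x = take l x @ drop l x"
      by simp
    with x show "x \<in> (\<Union>z\<in>{z. length z = r}. ?A z)"
      by (intro UN_I[of "drop l x"]) (auto intro!: image_eqI[of _ _ "take l x"])
  qed auto
  also have "card \<dots> = (\<Sum>z | length z = r. card (?A z))"
    using finite_bitstrings[of l] by (intro card_UN_disjoint finite_bitstrings) (auto intro: finite_subset)
  also have "\<dots> = (\<Sum>z | length z = r. card {y. length y = l \<and> P (y @ z)})"
    by (intro sum.cong refl card_image) (auto simp: inj_on_def)
  finally show ?thesis .
qed

lemma prob_bits_add: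
  "prob_bits (l + r) P = (\<Sum>z | length z = r. prob_bits l (\<lambda>y. P (y @ z))) / 2 ^ r"
  by (simp add: prob_bits_def card_bitstrings_add power_add sum_divide_distrib)

lemma exists_ge_average:
  fixes f :: "'a \<Rightarrow> real"
  assumes "finite A" "A \<noteq> {}" "real (card A) * t \<le> sum f A"
  shows "\<exists>x\<in>A. t \<le> f x"
proof (rule ccontr)
  assume "\<not> ?thesis"
  then have "sum f A < (\<Sum>x\<in>A. t)"
    using assms(1,2) by (intro sum_strict_mono) auto
  with assms(3) show False
    by simp
qed

lemma exists_suffix_ge_average:
  fixes a :: "bool list \<Rightarrow> real"
  assumes "t \<le> (\<Sum>z | length z = r. a z) / 2 ^ r"
  shows "\<exists>z. length z = r \<and> t \<le> a z"
proof -
  have "{z :: bool list. length z = r} \<noteq> {}"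
    by (auto intro: exI[of _ "replicate r False"])
  moreover have "real (card {z :: bool list. length z = r}) * t \<le> (\<Sum>z | length z = r. a z)"
    using assms by (simp add: card_bitstrings field_simps)
  ultimately show ?thesis
    using exists_ge_average[OF finite_bitstrings] by blast
qed

section \<open>Hardness survives padding\<close>

lemma prob_bits_accepts_add:
  "prob_bits (l + r) (nd_accepts D) = (\<Sum>z | length z = r. prob_bits l (nd_accepts (hardwire l z D))) / 2 ^ r"
  unfolding prob_bits_add by (intro arg_cong[where f = "\<lambda>t. t / 2 ^ r"] sum.cong refl prob_bits_cong)
    (simp add: nd_accepts_hardwire)

lemma prob_bits_accepts_padded:
  assumes "\<forall>x. length x = m \<longrightarrow> length (f x) = l"
  shows "prob_bits (m + r) (\<lambda>X. nd_accepts D (f (take m X) @ drop m X))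
    = (\<Sum>z | length z = r. prob_bits m (\<lambda>x. nd_accepts (hardwire l z D) (f x))) / 2 ^ r"
  unfolding prob_bits_add by (intro arg_cong[where f = "\<lambda>t. t / 2 ^ r"] sum.cong refl prob_bits_cong)
    (simp add: nd_accepts_hardwire assms)

lemma distinguisher_unpad:
  assumes len: "\<forall>x. length x = m \<longrightarrow> length (f x) = l"
    and size: "nd_size D \<le> s"
    and adv: "t \<le> prob_bits (l + r) (nd_accepts D)
                  - prob_bits (m + r) (\<lambda>X. nd_accepts D (f (take m X) @ drop m X))"
  shows "\<exists>D'. nd_size D' \<le> s \<and>
           t \<le> prob_bits l (nd_accepts D') - prob_bits m (\<lambda>x. nd_accepts D' (f x))"
proof -
  have "t \<le> (\<Sum>z | length z = r. prob_bits l (nd_accepts (hardwire l z D))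
                 - prob_bits m (\<lambda>x. nd_accepts (hardwire l z D) (f x))) / 2 ^ r"
    using adv by (simp add: prob_bits_accepts_add prob_bits_accepts_padded[OF len]
        sum_subtractf diff_divide_distrib)
  then obtain z where "t \<le> prob_bits l (nd_accepts (hardwire l z D))
                           - prob_bits m (\<lambda>x. nd_accepts (hardwire l z D) (f x))"
    using exists_suffix_ge_average by blast
  then show ?thesis
    using size by (intro exI[of _ "hardwire l z D"]) simp
qed

lemma refuter_unpad:
  assumes len: "\<forall>x. length x = m \<longrightarrow> length (f x) = l"
    and size: "nd_size D \<le> s"
    and accept: "t \<le> prob_bits (l + r) (nd_accepts D)"
    and reject: "prob_bits (m + r) (\<lambda>X. nd_accepts D (f (take m X) @ drop m X)) = 0"
  shows "\<exists>D'. nd_size D' \<le> s \<and>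
           t \<le> prob_bits l (nd_accepts D') \<and> prob_bits m (\<lambda>x. nd_accepts D' (f x)) = 0"
proof -
  obtain z where z: "length z = r" "t \<le> prob_bits l (nd_accepts (hardwire l z D))"
    using accept exists_suffix_ge_average by (metis prob_bits_accepts_add)
  have "(\<Sum>z | length z = r. prob_bits m (\<lambda>x. nd_accepts (hardwire l z D) (f x))) = 0"
    using reject by (simp add: prob_bits_accepts_padded[OF len])
  then have "prob_bits m (\<lambda>x. nd_accepts (hardwire l z D) (f x)) = 0"
    using z(1) by (simp add: sum_nonneg_eq_0_iff finite_bitstrings prob_bits_nonneg)
  with z(2) show ?thesis
    using size by (intro exI[of _ "hardwire l z D"]) simp
qed

lemma Hnh_le_padded:
  assumes "\<forall>x. length x = m \<longrightarrow> length (f x) = l"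
  shows "Hnh f m l \<le> Hnh (\<lambda>X. f (take m X) @ drop m X) (m + r) (l + r)"
  unfolding Hnh_def
proof (rule Inf_superset_mono, rule Collect_mono, intro impI, elim exE conjE)
  fix x s D
  assume "x = ereal (real s)" "1 \<le> s" "nd_size D \<le> s"
    "prob_bits (l + r) (nd_accepts D) - prob_bits (m + r) (\<lambda>X. nd_accepts D (f (take m X) @ drop m X))
       \<ge> 1 / real s"
  then show "\<exists>s. x = ereal (real s) \<and> 1 \<le> s \<and>
      (\<exists>D. nd_size D \<le> s \<and> prob_bits l (nd_accepts D) - prob_bits m (\<lambda>x. nd_accepts D (f x)) \<ge> 1 / real s)"
    using distinguisher_unpad[OF assms] by blast
qed

lemma Hdh_le_padded:
  assumes "\<forall>x. length x = m \<longrightarrow> length (f x) = l"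
  shows "Hdh f m l \<le> Hdh (\<lambda>X. f (take m X) @ drop m X) (m + r) (l + r)"
  unfolding Hdh_def
proof (rule Inf_superset_mono, rule Collect_mono, intro impI, elim exE conjE)
  fix x s D
  assume "x = ereal (real s)" "1 \<le> s" "nd_size D \<le> s"
    "prob_bits (l + r) (nd_accepts D) \<ge> 1 / real s"
    "prob_bits (m + r) (\<lambda>X. nd_accepts D (f (take m X) @ drop m X)) = 0"
  then show "\<exists>s. x = ereal (real s) \<and> 1 \<le> s \<and>
      (\<exists>D. nd_size D \<le> s \<and> prob_bits l (nd_accepts D) \<ge> 1 / real s \<and>
         prob_bits m (\<lambda>x. nd_accepts D (f x)) = 0)"
    using refuter_unpad[OF assms] by blast
qed

section \<open>Polynomially spaced sequences\<close>

lemma poly_le_const_times_power: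
  fixes p :: "real poly"
  shows "\<exists>A d. 1 \<le> A \<and> (\<forall>x\<ge>0. poly p x \<le> A * (x + 1) ^ d)"
proof (intro exI conjI allI impI)
  let ?d = "degree p"
  let ?S = "\<Sum>i\<le>?d. \<bar>coeff p i\<bar>"
  show "1 \<le> 1 + ?S"
    by (simp add: sum_nonneg)
  fix x :: real
  assume x: "0 \<le> x"
  have "poly p x = (\<Sum>i\<le>?d. coeff p i * x ^ i)"
    by (rule poly_altdef)
  also have "\<dots> \<le> (\<Sum>i\<le>?d. \<bar>coeff p i\<bar> * (x + 1) ^ ?d)"
  proof (rule sum_mono)
    fix i
    assume "i \<in> {..?d}"
    then have "x ^ i \<le> (x + 1) ^ ?d"
      using x power_mono[of x "x + 1" i] power_increasing[of i ?d "x + 1"] by simp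
    then have "\<bar>coeff p i\<bar> * x ^ i \<le> \<bar>coeff p i\<bar> * (x + 1) ^ ?d"
      by (rule mult_left_mono) simp
    moreover have "coeff p i * x ^ i \<le> \<bar>coeff p i\<bar> * x ^ i"
      using x by (intro mult_right_mono) auto
    ultimately show "coeff p i * x ^ i \<le> \<bar>coeff p i\<bar> * (x + 1) ^ ?d"
      by linarith
  qed
  also have "\<dots> = ?S * (x + 1) ^ ?d"
    by (simp add: sum_distrib_right)
  also have "\<dots> \<le> (1 + ?S) * (x + 1) ^ ?d"
    using x by (intro mult_right_mono) auto
  finally show "poly p x \<le> (1 + ?S) * (x + 1) ^ ?d" .
qed

definition block_index :: "(nat \<Rightarrow> nat) \<Rightarrow> nat \<Rightarrow> nat" where
  "block_index ns n = (LEAST i. n < ns (Suc i))"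

lemma block_index_bounds:
  assumes "strict_mono ns" "ns 0 \<le> n"
  shows "ns (block_index ns n) \<le> n" "n < ns (Suc (block_index ns n))"
proof -
  have "n < ns (Suc n)"
    using seq_suble[OF assms(1), of "Suc n"] by simp
  then show "n < ns (Suc (block_index ns n))"
    unfolding block_index_def by (rule LeastI)
  show "ns (block_index ns n) \<le> n"
  proof (cases "block_index ns n")
    case (Suc j)
    then have "\<not> n < ns (Suc j)"
      unfolding block_index_def by (metis lessI not_less_Least)
    with Suc show ?thesis
      by simp
  qed (use assms(2) in simp)
qed

lemma block_index_eqI:
  assumes "strict_mono ns" "ns i \<le> n" "n < ns (Suc i)"
  shows "block_index ns n = i"
  unfolding block_index_def
proof (rule Least_equality)
  fix j
  assume "n < ns (Suc j)"
  with assms(2) have "ns i < ns (Suc j)"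
    by simp
  then show "i \<le> j"
    using strict_mono_less[OF assms(1)] by simp
qed (rule assms(3))

lemma block_start_power_bound:
  fixes p :: "real poly"
  assumes sm: "strict_mono ns" and gap: "\<forall>i. real (ns (Suc i)) \<le> poly p (real (ns i))"
  shows "\<exists>d N. \<forall>n\<ge>N. ns 0 \<le> n \<and> 1 \<le> ns (block_index ns n)
           \<and> real n \<le> real (ns (block_index ns n)) ^ Suc d"
proof -
  obtain A d where A: "1 \<le> A" and bound: "\<forall>x\<ge>0. poly p x \<le> A * (x + 1) ^ d"
    using poly_le_const_times_power by blast
  \<comment> \<open>m \<ge> M makes A (m + 1)^d \<le> m^(d+1), and n \<ge> N forces the block start m to be \<ge> M\<close>
  define M where "M = A * 2 ^ d"
  define N where "N = max (ns 0) (nat \<lceil>A * (M + 1) ^ d\<rceil>)"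
  have M: "1 \<le> M"
    unfolding M_def using A mult_mono[of 1 A 1 "2 ^ d :: real"] by simp
  show ?thesis
  proof (intro exI allI impI conjI)
    fix n
    assume n: "N \<le> n"
    then show n0: "ns 0 \<le> n"
      by (simp add: N_def)
    define m where "m = ns (block_index ns n)"
    have "real n < real (ns (Suc (block_index ns n)))"
      using block_index_bounds(2)[OF sm n0] by simp
    also have "\<dots> \<le> poly p (real m)"
      using gap by (simp add: m_def)
    also have "\<dots> \<le> A * (real m + 1) ^ d"
      using bound by simp
    finally have n_lt: "real n < A * (real m + 1) ^ d" .
    have mM: "M \<le> real m"
    proof (rule ccontr)
      assume "\<not> M \<le> real m"
      then have "A * (real m + 1) ^ d \<le> A * (M + 1) ^ d"
        using A by (intro mult_left_mono power_mono) auto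
      also have "\<dots> \<le> real n"
        using n unfolding N_def by linarith
      finally show False
        using n_lt by simp
    qed
    then show "1 \<le> m"
      using M by simp
    have "(real m + 1) ^ d \<le> (2 * real m) ^ d"
      using mM M by (intro power_mono) auto
    then have "real n \<le> A * (2 * real m) ^ d"
      using n_lt A mult_left_mono[of "(real m + 1) ^ d" "(2 * real m) ^ d" A] by linarith
    also have "\<dots> = M * real m ^ d"
      by (simp add: M_def power_mult_distrib)
    also have "\<dots> \<le> real m ^ Suc d"
      using mM by (simp add: mult_right_mono)
    finally show "real n \<le> real m ^ Suc d" .
  qed
qed

lemma powr_le_of_le_power:
  fixes x y \<epsilon> :: real
  assumes "0 \<le> x" "x \<le> y ^ Suc d" "0 < y" "0 < \<epsilon>"
  shows "x powr (\<epsilon> / real (Suc d)) \<le> y powr \<epsilon>"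
proof -
  have "x powr (\<epsilon> / real (Suc d)) \<le> (y ^ Suc d) powr (\<epsilon> / real (Suc d))"
    using assms by (intro powr_mono2) auto
  also have "\<dots> = y powr (real (Suc d) * (\<epsilon> / real (Suc d)))"
    unfolding powr_realpow[OF assms(3), symmetric] powr_powr ..
  also have "\<dots> = y powr \<epsilon>"
    by simp
  finally show ?thesis .
qed

text \<open>Below n_0 the output is an arbitrary stretch: only lengths from n_0 on matter.\<close>
definition padded_gen ::
    "nat \<Rightarrow> (nat \<Rightarrow> nat) \<Rightarrow> (nat \<Rightarrow> bool list \<Rightarrow> bool list) \<Rightarrow> nat \<Rightarrow> bool list \<Rightarrow> bool list" where
  "padded_gen c ns g n x =
     (if n < ns 0 then replicate c False @ x
      else g (ns (block_index ns n)) (take (ns (block_index ns n)) x) @ drop (ns (block_index ns n)) x)"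

lemma padded_gen_block:
  assumes "strict_mono ns" "ns i \<le> n" "n < ns (Suc i)"
  shows "padded_gen c ns g n = (\<lambda>x. g (ns i) (take (ns i) x) @ drop (ns i) x)"
proof -
  have "ns 0 \<le> n"
    using assms(2) strict_mono_less_eq[OF assms(1), of 0 i] by simp
  then show ?thesis
    using block_index_eqI[OF assms] by (simp add: padded_gen_def fun_eq_iff)
qed

lemma power_plus_le_power_add_two: "(n::nat) ^ k + n \<le> n ^ (k + 2) + 1"
proof (cases "n = 0")
  case True
  then show ?thesis
    by (cases k) simp_all
next
  case False
  obtain a where a: "n ^ k = Suc a"
    using False by (cases "n ^ k") auto
  obtain b where b: "n * n = Suc b"
    using False by (cases "n * n") auto
  have "n ^ k + n * n \<le> n ^ k * (n * n) + 1"
    unfolding a b by simp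
  moreover have "n \<le> n * n" "n ^ (k + 2) = n ^ k * (n * n)"
    using False by (simp_all add: power_add power2_eq_square)
  ultimately show ?thesis
    by linarith
qed

lemma is_generator_padded_gen:
  assumes gen: "is_generator g (\<lambda>n. n + c)" and sm: "strict_mono ns"
  shows "is_generator (padded_gen c ns g) (\<lambda>n. n + c)"
proof -
  have stretch: "\<forall>n. n < n + c" and len: "\<forall>n x. length x = n \<longrightarrow> length (g n x) = n + c"
    using gen unfolding is_generator_def by blast+
  obtain k where k: "\<forall>m. \<exists>C. mcirc_size C \<le> m ^ k + k \<and> (\<forall>x. length x = m \<longrightarrow> mcirc_eval C x = g m x)"
    using gen unfolding is_generator_def by blast
  have "\<exists>C. mcirc_size C \<le> n ^ (k + 2) + (k + 2) \<and>
        (\<forall>x. length x = n \<longrightarrow> mcirc_eval C x = padded_gen c ns g n x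
                              \<and> length (padded_gen c ns g n x) = n + c)" for n
  proof (cases "n < ns 0")
    case True
    let ?C = "copy_suffix 0 n ([], replicate c 0)"
    have "mcirc_eval ?C x = padded_gen c ns g n x" if "length x = n" for x
      using mcirc_eval_copy_suffix[OF that, of 0] True by (simp add: padded_gen_def mcirc_eval_def)
    moreover have "mcirc_size ?C \<le> n ^ (k + 2) + (k + 2)"
      using mcirc_size_copy_suffix[of 0 n "([], replicate c 0)"] power_plus_le_power_add_two[of n k]
      by (simp add: mcirc_size_def)
    ultimately show ?thesis
      using True by (intro exI[of _ ?C]) (simp add: padded_gen_def)
  next
    case False
    obtain i where i: "ns i \<le> n" "n < ns (Suc i)"
      using block_index_bounds[OF sm] False by (meson not_le)
    obtain C where C: "mcirc_size C \<le> ns i ^ k + k" "\<forall>x. length x = ns i \<longrightarrow> mcirc_eval C x = g (ns i) x"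
      using k by blast
    have "mcirc_size (copy_suffix (ns i) n C) \<le> n ^ k + k + 1 + n"
      using C(1) power_mono[OF i(1), of k] by (simp add: mcirc_size_copy_suffix)
    also have "\<dots> \<le> n ^ (k + 2) + (k + 2)"
      using power_plus_le_power_add_two[of n k] by simp
    finally have "mcirc_size (copy_suffix (ns i) n C) \<le> n ^ (k + 2) + (k + 2)" .
    moreover have "mcirc_eval (copy_suffix (ns i) n C) x = padded_gen c ns g n x
        \<and> length (padded_gen c ns g n x) = n + c" if "length x = n" for x
      using that i(1) C(2) len[rule_format, where n = "ns i" and x = "take (ns i) x"]
      by (simp add: padded_gen_block[OF sm i] mcirc_eval_copy_suffix)
    ultimately show ?thesis
      by blast
  qed
  then show ?thesis
    unfolding is_generator_def using stretch by (intro conjI allI impI exI[of _ "k + 2"]) blast+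
qed

lemma padded_gen_hard:
  fixes H :: "(bool list \<Rightarrow> bool list) \<Rightarrow> nat \<Rightarrow> nat \<Rightarrow> ereal"
  assumes H_padded: "\<And>f m l r. \<forall>x. length x = m \<longrightarrow> length (f x) = l \<Longrightarrow>
                       H f m l \<le> H (\<lambda>X. f (take m X) @ drop m X) (m + r) (l + r)"
    and len: "\<forall>n x. length x = n \<longrightarrow> length (g n x) = n + c"
    and sm: "strict_mono ns" and gap: "\<forall>i. real (ns (Suc i)) \<le> poly p (real (ns i))"
    and eps: "0 < \<epsilon>"
    and hard: "\<forall>n\<in>range ns. ereal (2 powr (real n powr \<epsilon>)) \<le> H (g n) n (n + c)"
  shows "\<exists>\<delta>>0. \<exists>N. \<forall>n\<ge>N. ereal (2 powr (real n powr \<delta>)) \<le> H (padded_gen c ns g n) n (n + c)"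
proof -
  obtain d N where dN: "\<forall>n\<ge>N. ns 0 \<le> n \<and> 1 \<le> ns (block_index ns n)
                              \<and> real n \<le> real (ns (block_index ns n)) ^ Suc d"
    using block_start_power_bound[OF sm gap] by blast
  show ?thesis
  proof (intro exI conjI allI impI)
    show "0 < \<epsilon> / real (Suc d)"
      using eps by simp
    fix n
    assume "N \<le> n"
    with dN have n0: "ns 0 \<le> n" and m: "1 \<le> ns (block_index ns n)"
      and n_le: "real n \<le> real (ns (block_index ns n)) ^ Suc d"
      by auto
    define i where "i = block_index ns n"
    have i: "ns i \<le> n" "n < ns (Suc i)"
      using block_index_bounds[OF sm n0] by (simp_all add: i_def)
    have "real n powr (\<epsilon> / real (Suc d)) \<le> real (ns i) powr \<epsilon>"
      using m n_le eps by (intro powr_le_of_le_power) (auto simp: i_def)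
    then have "ereal (2 powr (real n powr (\<epsilon> / real (Suc d)))) \<le> ereal (2 powr (real (ns i) powr \<epsilon>))"
      by simp
    also have "\<dots> \<le> H (g (ns i)) (ns i) (ns i + c)"
      using hard by simp
    also have "\<dots> \<le> H (\<lambda>X. g (ns i) (take (ns i) X) @ drop (ns i) X) (ns i + (n - ns i)) (ns i + c + (n - ns i))"
      by (rule H_padded) (use len in blast)
    also have "\<dots> = H (padded_gen c ns g n) n (n + c)"
      using i by (simp add: padded_gen_block[OF sm i] add.commute)
    finally show "ereal (2 powr (real n powr (\<epsilon> / real (Suc d)))) \<le> H (padded_gen c ns g n) n (n + c)" .
  qed
qed

theorem lemma2p1:
  fixes c :: nat and g :: "nat \<Rightarrow> bool list \<Rightarrow> bool list"
    and p :: "real poly" and \<epsilon> :: real and ns :: "nat \<Rightarrow> nat"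
  assumes gen: "is_generator g (\<lambda>n. n + c)"
    and eps: "\<epsilon> > 0"
    and incr: "strict_mono ns"
    and growth: "\<forall>i. real (ns (Suc i)) \<le> poly p (real (ns i))"
  shows "((\<forall>n \<in> range ns. Hnh (g n) n (n + c) \<ge> ereal (2 powr (real n powr \<epsilon>))) \<longrightarrow>
           (\<exists>G. super_bits G c \<and>
              (\<forall>i n x. ns i \<le> n \<longrightarrow> n < ns (Suc i) \<longrightarrow> length x = n \<longrightarrow>
                 G n x = g (ns i) (take (ns i) x) @ drop (ns i) x)))
       \<and> ((\<forall>n \<in> range ns. Hdh (g n) n (n + c) \<ge> ereal (2 powr (real n powr \<epsilon>))) \<longrightarrow>
           (\<exists>G. demi_bits G c \<and>
              (\<forall>i n x. ns i \<le> n \<longrightarrow> n < ns (Suc i) \<longrightarrow> length x = n \<longrightarrow>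
                 G n x = g (ns i) (take (ns i) x) @ drop (ns i) x)))"
proof -
  have len: "\<forall>n x. length x = n \<longrightarrow> length (g n x) = n + c"
    using gen unfolding is_generator_def by blast
  have padded: "is_generator (padded_gen c ns g) (\<lambda>n. n + c)"
    by (rule is_generator_padded_gen[OF gen incr])
  have spec: "\<forall>i n x. ns i \<le> n \<longrightarrow> n < ns (Suc i) \<longrightarrow> length x = n \<longrightarrow>
      padded_gen c ns g n x = g (ns i) (take (ns i) x) @ drop (ns i) x"
    using padded_gen_block[OF incr] by simp
  show ?thesis
  proof (intro conjI impI)
    assume "\<forall>n \<in> range ns. Hnh (g n) n (n + c) \<ge> ereal (2 powr (real n powr \<epsilon>))"
    then have "super_bits (padded_gen c ns g) c"
      unfolding super_bits_def using padded padded_gen_hard[where H = Hnh, OF Hnh_le_padded len incr growth eps] by blast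
    with spec show "\<exists>G. super_bits G c \<and> (\<forall>i n x. ns i \<le> n \<longrightarrow> n < ns (Suc i) \<longrightarrow> length x = n \<longrightarrow>
                 G n x = g (ns i) (take (ns i) x) @ drop (ns i) x)"
      by blast
  next
    assume "\<forall>n \<in> range ns. Hdh (g n) n (n + c) \<ge> ereal (2 powr (real n powr \<epsilon>))"
    then have "demi_bits (padded_gen c ns g) c"
      unfolding demi_bits_def using padded padded_gen_hard[where H = Hdh, OF Hdh_le_padded len incr growth eps] by blast
    with spec show "\<exists>G. demi_bits G c \<and> (\<forall>i n x. ns i \<le> n \<longrightarrow> n < ns (Suc i) \<longrightarrow> length x = n \<longrightarrow>
                 G n x = g (ns i) (take (ns i) x) @ drop (ns i) x)"
      by blast
  qed
qed

end
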